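(* Let $k\ge2$, $1\le m\le k-1$, and let $(k_1,\dots,k_m)$ be an ordered partition of $k$ into positive integers. Let $X_{k_1,\dots,k_m}$ be the set of $k$-admissible $m\times k$ matrices with entries in $\{0,\pm1\}$, having exactly one nonzero entry in each column and exactly $k_i$ nonzero entries in row $i$ for each $i$. Then $$\#X_{k_1,\dots,k_m}=2^{k-m}\prod_{i=1}^{m-1}\binom{k-\sum_{j=1}^{i-1}k_j-1}{k_i-1},$$ where the empty product is $1$ and the empty sum is $0$.
   Context: For $k\ge2$, a division $(\nu,\mu)$ of $\{1,\dots,k\}$ consists of $1\le m\le k-1$ and strictly increasing sequences $\nu_1<\dots<\nu_m$, $\mu_1<\dots<\mu_{k-m}$ in $\{1,\dots,k\}$ which are disjoint. Given a positive integer $q$, an $m\times k$ integer matrix $D=(d_{ij})$ is $(\nu,\mu)$-admissible if no column vanishes, the gcd of its entries is $1$, $d_{i\nu_j}=q\delta_{ij}$ for $1\le i,j\le m$, and $d_{i\mu_j}=0$ whenever $\mu_j<\nu_i$. $D$ is $k$-admissible if it is $(\nu,\mu)$-admissible for some division $(\nu,\mu)$ and some positive integer $q$. *)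

theory Defs
  imports Main
begin

text \<open>Matrices are functions nat => nat => int, rows indexed 1..m, columns 1..k.
Sequences nu_1<...<nu_m and mu_1<...<mu_(k-m) are functions on {1..m}, {1..k-m}.\<close>

definition is_division :: "nat \<Rightarrow> nat \<Rightarrow> (nat \<Rightarrow> nat) \<Rightarrow> (nat \<Rightarrow> nat) \<Rightarrow> bool" where
  "is_division k m \<nu> \<mu> \<longleftrightarrow>
     1 \<le> m \<and> m \<le> k - 1 \<and>
     strict_mono_on {1..m} \<nu> \<and> \<nu> ` {1..m} \<subseteq> {1..k} \<and>
     strict_mono_on {1..k-m} \<mu> \<and> \<mu> ` {1..k-m} \<subseteq> {1..k} \<and>
     \<nu> ` {1..m} \<inter> \<mu> ` {1..k-m} = {}"

definition admissible_wrt ::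
  "nat \<Rightarrow> nat \<Rightarrow> (nat \<Rightarrow> nat) \<Rightarrow> (nat \<Rightarrow> nat) \<Rightarrow> int \<Rightarrow> (nat \<Rightarrow> nat \<Rightarrow> int) \<Rightarrow> bool" where
  "admissible_wrt k m \<nu> \<mu> q D \<longleftrightarrow>
     (\<forall>j\<in>{1..k}. \<exists>i\<in>{1..m}. D i j \<noteq> 0) \<and>
     Gcd {D i j | i j. i \<in> {1..m} \<and> j \<in> {1..k}} = 1 \<and>
     (\<forall>i\<in>{1..m}. \<forall>j\<in>{1..m}. D i (\<nu> j) = (if i = j then q else 0)) \<and>
     (\<forall>i\<in>{1..m}. \<forall>j\<in>{1..k-m}. \<mu> j < \<nu> i \<longrightarrow> D i (\<mu> j) = 0)"

definition k_admissible :: "nat \<Rightarrow> nat \<Rightarrow> (nat \<Rightarrow> nat \<Rightarrow> int) \<Rightarrow> bool" where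
  "k_admissible k m D \<longleftrightarrow>
     2 \<le> k \<and> (\<exists>\<nu> \<mu> q. q > 0 \<and> is_division k m \<nu> \<mu> \<and> admissible_wrt k m \<nu> \<mu> q D)"

definition X_set :: "nat \<Rightarrow> nat \<Rightarrow> (nat \<Rightarrow> nat) \<Rightarrow> (nat \<Rightarrow> nat \<Rightarrow> int) set" where
  "X_set k m kk = {D.
     (\<forall>i j. i \<notin> {1..m} \<or> j \<notin> {1..k} \<longrightarrow> D i j = 0) \<and>
     (\<forall>i j. D i j \<in> {-1, 0, 1}) \<and>
     k_admissible k m D \<and>
     (\<forall>j\<in>{1..k}. card {i\<in>{1..m}. D i j \<noteq> 0} = 1) \<and>
     (\<forall>i\<in>{1..m}. card {j\<in>{1..k}. D i j \<noteq> 0} = kk i)}"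

end

theory Submission
  imports Defs "HOL-Library.FuncSet" "HOL-Library.Infinite_Set"
begin

text \<open>
For sign matrices with exactly one nonzero entry in each column, admissibility is an echelon
condition: every row has a leading entry, equal to 1, and the leading columns increase down
the rows (the division consists of the leading columns and their complement, and \<open>q\<close> is
forced to be 1). So the leading entry of the first row sits in the first column, and a matrix
amounts to the support of its first row (a \<open>k\<^sub>1\<close>-set containing the first column), the signs
of the remaining entries of that row, and a matrix of the same kind on the remaining rows and
columns. Induction on the number of rows gives the formula; the factor of the last row is
\<open>binom (k\<^sub>m - 1) (k\<^sub>m - 1) = 1\<close>.
\<close>

definition normalized_sign_vectors :: "nat \<Rightarrow> nat set \<Rightarrow> (nat \<Rightarrow> int) set" where
  "normalized_sign_vectors a S =
     {p. (\<forall>j. p j \<noteq> 0 \<longleftrightarrow> j \<in> S) \<and> (\<forall>j. p j \<in> {-1, 0, 1}) \<and> p a = 1}"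

definition echelon_sign_matrices ::
  "(nat \<Rightarrow> nat) \<Rightarrow> nat set \<Rightarrow> nat set \<Rightarrow> (nat \<Rightarrow> nat \<Rightarrow> int) set" where
  "echelon_sign_matrices kk I A = {D.
     (\<forall>i j. i \<notin> I \<or> j \<notin> A \<longrightarrow> D i j = 0) \<and>
     (\<forall>i j. D i j \<in> {-1, 0, 1}) \<and>
     (\<forall>j\<in>A. card {i\<in>I. D i j \<noteq> 0} = 1) \<and>
     (\<forall>i\<in>I. card {j\<in>A. D i j \<noteq> 0} = kk i) \<and>
     (\<exists>\<nu>. strict_mono_on I \<nu> \<and>
        (\<forall>i\<in>I. D i (\<nu> i) = 1 \<and> (\<forall>j\<in>A. D i j \<noteq> 0 \<longrightarrow> \<nu> i \<le> j)))}"

text \<open>Row \<open>i\<close> chooses its support among the columns left over by the rows above it, and the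
  support has to contain the least of these columns.\<close>

definition row_support_choices :: "(nat \<Rightarrow> nat) \<Rightarrow> nat \<Rightarrow> nat set \<Rightarrow> nat" where
  "row_support_choices kk N I =
     (\<Prod>i\<in>I. (N - (\<Sum>j\<in>{j\<in>I. j < i}. kk j) - 1) choose (kk i - 1))"

lemma echelon_sign_matricesE:
  assumes "D \<in> echelon_sign_matrices kk I A"
  obtains \<nu> where
    "\<And>i j. i \<notin> I \<or> j \<notin> A \<Longrightarrow> D i j = 0" "\<And>i j. D i j \<in> {-1, 0, 1}"
    "\<And>j. j \<in> A \<Longrightarrow> card {i\<in>I. D i j \<noteq> 0} = 1"
    "\<And>i. i \<in> I \<Longrightarrow> card {j\<in>A. D i j \<noteq> 0} = kk i"
    "strict_mono_on I \<nu>" "\<And>i. i \<in> I \<Longrightarrow> D i (\<nu> i) = 1"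
    "\<And>i j. i \<in> I \<Longrightarrow> j \<in> A \<Longrightarrow> D i j \<noteq> 0 \<Longrightarrow> \<nu> i \<le> j"
  using assms unfolding echelon_sign_matrices_def by blast

lemma echelon_sign_matrices_column_unique:
  assumes D: "D \<in> echelon_sign_matrices kk I A" and "D i j \<noteq> 0" "D i' j \<noteq> 0"
  shows "i = i'"
proof -
  have "i \<in> I" "i' \<in> I" "j \<in> A" and card: "card {i\<in>I. D i j \<noteq> 0} = 1"
    using assms unfolding echelon_sign_matrices_def by auto
  obtain x where x: "{i\<in>I. D i j \<noteq> 0} = {x}" using card by (rule card_1_singletonE)
  have "i \<in> {i\<in>I. D i j \<noteq> 0}" "i' \<in> {i\<in>I. D i j \<noteq> 0}"
    using \<open>i \<in> I\<close> \<open>i' \<in> I\<close> assms(2,3) by simp_all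
  then show ?thesis unfolding x by simp
qed

lemma echelon_sign_matrices_empty: "echelon_sign_matrices kk {} {} = {\<lambda>_ _. 0}"
proof (intro equalityI subsetI)
  fix D assume "D \<in> echelon_sign_matrices kk {} {}"
  then have "D i j = 0" for i j unfolding echelon_sign_matrices_def by blast
  then show "D \<in> {\<lambda>_ _. 0}" by blast
next
  fix D :: "nat \<Rightarrow> nat \<Rightarrow> int" assume "D \<in> {\<lambda>_ _. 0}"
  moreover have "strict_mono_on {} id" by (rule strict_mono_on_id)
  ultimately show "D \<in> echelon_sign_matrices kk {} {}"
    unfolding echelon_sign_matrices_def by simp
qed

lemma finite_echelon_sign_matrices:
  assumes "finite I" "finite A"
  shows "finite (echelon_sign_matrices kk I A)"
proof (rule finite_subset)
  let ?extend = "\<lambda>g i j. if i \<in> I \<and> j \<in> A then g (i, j) else 0 :: int"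
  show "echelon_sign_matrices kk I A \<subseteq> ?extend ` (I \<times> A \<rightarrow>\<^sub>E {-1, 0, 1})"
  proof
    fix D assume D: "D \<in> echelon_sign_matrices kk I A"
    let ?g = "restrict (\<lambda>(i, j). D i j) (I \<times> A)"
    have "D = ?extend ?g" using D unfolding echelon_sign_matrices_def by (intro ext) auto
    moreover have "?g \<in> I \<times> A \<rightarrow>\<^sub>E {-1, 0, 1}"
      using D unfolding echelon_sign_matrices_def restrict_PiE_iff by auto
    ultimately show "D \<in> ?extend ` (I \<times> A \<rightarrow>\<^sub>E {-1, 0, 1})" by blast
  qed
  show "finite (?extend ` (I \<times> A \<rightarrow>\<^sub>E {-1, 0, 1}))"
    using assms by (simp add: finite_PiE)
qed

lemma echelon_leading_entry:
  assumes D: "D \<in> echelon_sign_matrices kk I A" and "finite A"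
    and i0: "i0 \<in> I" "\<forall>i\<in>I. i0 \<le> i"
  shows "D i0 (Min A) = 1"
proof -
  obtain \<nu> where support: "\<And>i j. i \<notin> I \<or> j \<notin> A \<Longrightarrow> D i j = 0"
    and column: "\<And>j. j \<in> A \<Longrightarrow> card {i\<in>I. D i j \<noteq> 0} = 1"
    and mono: "strict_mono_on I \<nu>" and pivot: "\<And>i. i \<in> I \<Longrightarrow> D i (\<nu> i) = 1"
    and leading: "\<And>i j. i \<in> I \<Longrightarrow> j \<in> A \<Longrightarrow> D i j \<noteq> 0 \<Longrightarrow> \<nu> i \<le> j"
    by (rule echelon_sign_matricesE[OF D]) blast
  have "\<nu> i0 \<in> A" using pivot[OF i0(1)] support by (metis zero_neq_one)
  then have "A \<noteq> {}" by blast
  have MinA: "Min A \<in> A" "Min A \<le> \<nu> i0"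
    using Min_in[OF \<open>finite A\<close> \<open>A \<noteq> {}\<close>] Min_le[OF \<open>finite A\<close> \<open>\<nu> i0 \<in> A\<close>] .
  have "{i\<in>I. D i (Min A) \<noteq> 0} \<noteq> {}"
    using column[OF MinA(1)] by (metis card.empty zero_neq_one)
  then obtain i where i: "i \<in> I" "D i (Min A) \<noteq> 0" by blast
  have "\<nu> i \<le> Min A" using leading[OF i(1) MinA(1) i(2)] .
  have "i = i0"
  proof (rule ccontr)
    assume "i \<noteq> i0"
    then have "\<nu> i0 < \<nu> i" using i0 i(1) by (intro strict_mono_onD[OF mono]) auto
    then show False using \<open>\<nu> i \<le> Min A\<close> MinA(2) by simp
  qed
  then show ?thesis using \<open>\<nu> i \<le> Min A\<close> MinA(2) pivot[OF i0(1)] by simp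
qed

lemma echelon_remove_row:
  assumes D: "D \<in> echelon_sign_matrices kk I A"
  shows "D(i0 := (\<lambda>_. 0)) \<in> echelon_sign_matrices kk (I - {i0}) (A - {j\<in>A. D i0 j \<noteq> 0})"
    (is "?D \<in> echelon_sign_matrices kk _ ?A")
proof -
  obtain \<nu> where support: "\<And>i j. i \<notin> I \<or> j \<notin> A \<Longrightarrow> D i j = 0"
    and entries: "\<And>i j. D i j \<in> {-1, 0, 1}"
    and column: "\<And>j. j \<in> A \<Longrightarrow> card {i\<in>I. D i j \<noteq> 0} = 1"
    and row: "\<And>i. i \<in> I \<Longrightarrow> card {j\<in>A. D i j \<noteq> 0} = kk i"
    and mono: "strict_mono_on I \<nu>" and pivot: "\<And>i. i \<in> I \<Longrightarrow> D i (\<nu> i) = 1"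
    and leading: "\<And>i j. i \<in> I \<Longrightarrow> j \<in> A \<Longrightarrow> D i j \<noteq> 0 \<Longrightarrow> \<nu> i \<le> j"
    by (rule echelon_sign_matricesE[OF D]) blast
  have other_rows: "D i j = 0" if "D i0 j \<noteq> 0" "i \<noteq> i0" for i j
    using echelon_sign_matrices_column_unique[OF D _ that(1)] that(2) by blast
  show ?thesis
    unfolding echelon_sign_matrices_def
  proof (intro CollectI conjI allI ballI impI exI)
    fix i j assume "i \<notin> I - {i0} \<or> j \<notin> ?A"
    then show "?D i j = 0" using support other_rows by auto
  next
    fix i j show "?D i j \<in> {-1, 0, 1}" using entries by simp
  next
    fix j assume j: "j \<in> ?A"
    then have "{i\<in>I - {i0}. ?D i j \<noteq> 0} = {i\<in>I. D i j \<noteq> 0}" by auto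
    then show "card {i\<in>I - {i0}. ?D i j \<noteq> 0} = 1" using column j by (simp only:) blast
  next
    fix i assume i: "i \<in> I - {i0}"
    then have "{j\<in>?A. ?D i j \<noteq> 0} = {j\<in>A. D i j \<noteq> 0}" using other_rows by auto
    then show "card {j\<in>?A. ?D i j \<noteq> 0} = kk i" using row i by (simp only:) blast
  next
    show "strict_mono_on (I - {i0}) \<nu>" using mono by (rule monotone_on_subset) auto
  next
    fix i assume "i \<in> I - {i0}"
    then show "?D i (\<nu> i) = 1" using pivot[of i] by simp
  next
    fix i j assume "i \<in> I - {i0}" "j \<in> ?A" "?D i j \<noteq> 0"
    then show "\<nu> i \<le> j" using leading[of i j] by simp
  qed
qed

lemma strict_mono_on_insert_least:
  fixes f :: "'a::order \<Rightarrow> 'b::order"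
  assumes "strict_mono_on I f" "\<forall>i\<in>I. x < i \<and> c < f i"
  shows "strict_mono_on (insert x I) (f(x := c))"
proof (rule strict_mono_onI)
  fix r s assume "r \<in> insert x I" "s \<in> insert x I" "r < s"
  then show "(f(x := c)) r < (f(x := c)) s"
    using assms(2) strict_mono_onD[OF assms(1)] by (cases "r = x"; cases "s = x") auto
qed

lemma echelon_add_leading_row:
  assumes D: "D \<in> echelon_sign_matrices kk I (A - S)" and "finite A"
    and below: "\<forall>i\<in>I. i0 < i"
    and S: "S \<subseteq> A" "Min A \<in> S" "card S = kk i0"
    and p: "p \<in> normalized_sign_vectors (Min A) S"
  shows "D(i0 := p) \<in> echelon_sign_matrices kk (insert i0 I) A" (is "?D \<in> _")
proof -
  obtain \<nu> where support: "\<And>i j. i \<notin> I \<or> j \<notin> A - S \<Longrightarrow> D i j = 0"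
    and entries: "\<And>i j. D i j \<in> {-1, 0, 1}"
    and column: "\<And>j. j \<in> A - S \<Longrightarrow> card {i\<in>I. D i j \<noteq> 0} = 1"
    and row: "\<And>i. i \<in> I \<Longrightarrow> card {j\<in>A - S. D i j \<noteq> 0} = kk i"
    and mono: "strict_mono_on I \<nu>" and pivot: "\<And>i. i \<in> I \<Longrightarrow> D i (\<nu> i) = 1"
    and leading: "\<And>i j. i \<in> I \<Longrightarrow> j \<in> A - S \<Longrightarrow> D i j \<noteq> 0 \<Longrightarrow> \<nu> i \<le> j"
    by (rule echelon_sign_matricesE[OF D]) blast
  have p_support: "p j \<noteq> 0 \<longleftrightarrow> j \<in> S" and p_values: "p j \<in> {-1, 0, 1}" and "p (Min A) = 1"
    for j using p unfolding normalized_sign_vectors_def by auto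
  have "i0 \<notin> I" using below by blast
  have "\<nu> i \<in> A - S" if "i \<in> I" for i
    using pivot[OF that] support by (metis zero_neq_one)
  then have pivot_gt: "Min A < \<nu> i" if "i \<in> I" for i
    using that S(2) \<open>finite A\<close> by (metis DiffE Min_le order_le_neq_trans)
  show ?thesis
    unfolding echelon_sign_matrices_def
  proof (intro CollectI conjI allI ballI impI exI)
    fix i j assume "i \<notin> insert i0 I \<or> j \<notin> A"
    then show "?D i j = 0" using support p_support S(1) by auto
  next
    fix i j show "?D i j \<in> {-1, 0, 1}" using entries p_values by simp
  next
    fix j assume j: "j \<in> A"
    show "card {i\<in>insert i0 I. ?D i j \<noteq> 0} = 1"
    proof (cases "j \<in> S")
      case True
      then have "{i\<in>insert i0 I. ?D i j \<noteq> 0} = {i0}" using p_support support by auto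
      then show ?thesis by simp
    next
      case False
      then have "{i\<in>insert i0 I. ?D i j \<noteq> 0} = {i\<in>I. D i j \<noteq> 0}"
        using p_support \<open>i0 \<notin> I\<close> by auto
      then show ?thesis using column j False by simp
    qed
  next
    fix i assume i: "i \<in> insert i0 I"
    show "card {j\<in>A. ?D i j \<noteq> 0} = kk i"
    proof (cases "i = i0")
      case True
      then have "{j\<in>A. ?D i j \<noteq> 0} = S" using p_support S(1) by auto
      then show ?thesis using S(3) True by simp
    next
      case False
      then have "{j\<in>A. ?D i j \<noteq> 0} = {j\<in>A - S. D i j \<noteq> 0}" using support by auto
      then show ?thesis using row i False by simp
    qed
  next
    show "strict_mono_on (insert i0 I) (\<nu>(i0 := Min A))"
      using mono below pivot_gt by (intro strict_mono_on_insert_least) auto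
  next
    fix i assume "i \<in> insert i0 I"
    then show "?D i ((\<nu>(i0 := Min A)) i) = 1"
      using pivot \<open>p (Min A) = 1\<close> \<open>i0 \<notin> I\<close> by auto
  next
    fix i j assume i: "i \<in> insert i0 I" and j: "j \<in> A" and "?D i j \<noteq> 0"
    show "(\<nu>(i0 := Min A)) i \<le> j"
    proof (cases "i = i0")
      case True
      then show ?thesis using \<open>finite A\<close> j by simp
    next
      case False
      then have "D i j \<noteq> 0" using \<open>?D i j \<noteq> 0\<close> by simp
      then show ?thesis using leading i j False support by fastforce
    qed
  qed
qed

lemma echelon_leading_row_bij:
  assumes "finite I" "I \<noteq> {}" "finite A" "A \<noteq> {}"
  defines "i0 \<equiv> Min I"
  shows "bij_betw (\<lambda>D. ({j\<in>A. D i0 j \<noteq> 0}, D i0, D(i0 := (\<lambda>_. 0))))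
     (echelon_sign_matrices kk I A)
     (SIGMA S:{S. S \<subseteq> A \<and> Min A \<in> S \<and> card S = kk i0}.
        normalized_sign_vectors (Min A) S \<times> echelon_sign_matrices kk (I - {i0}) (A - S))"
    (is "bij_betw ?split _ ?parts")
proof (rule bij_betw_byWitness[where f' = "\<lambda>(S, p, D). D(i0 := p)"])
  let ?join = "\<lambda>(S, p, D). D(i0 := p)"
  have i0: "i0 \<in> I" "\<forall>i\<in>I. i0 \<le> i" using assms by simp_all
  show "\<forall>D\<in>echelon_sign_matrices kk I A. ?join (?split D) = D"
    by simp
  show "\<forall>x\<in>?parts. ?split (?join x) = x"
    unfolding normalized_sign_vectors_def echelon_sign_matrices_def by (fastforce intro!: ext)
  show "?split ` echelon_sign_matrices kk I A \<subseteq> ?parts"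
  proof (rule image_subsetI)
    fix D assume D: "D \<in> echelon_sign_matrices kk I A"
    have "D i0 (Min A) = 1" using echelon_leading_entry[OF D \<open>finite A\<close> i0] .
    moreover have "Min A \<in> A" using assms by simp
    ultimately have "{j\<in>A. D i0 j \<noteq> 0} \<in> {S. S \<subseteq> A \<and> Min A \<in> S \<and> card S = kk i0}"
      and "D i0 \<in> normalized_sign_vectors (Min A) {j\<in>A. D i0 j \<noteq> 0}"
      using D i0 unfolding normalized_sign_vectors_def echelon_sign_matrices_def by auto
    then show "?split D \<in> ?parts" using echelon_remove_row[OF D] by simp
  qed
  show "?join ` ?parts \<subseteq> echelon_sign_matrices kk I A"
  proof (rule image_subsetI)
    fix x assume "x \<in> ?parts"
    then obtain S p D where x: "x = (S, p, D)" and S: "S \<subseteq> A" "Min A \<in> S" "card S = kk i0"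
      and p: "p \<in> normalized_sign_vectors (Min A) S"
      and D: "D \<in> echelon_sign_matrices kk (I - {i0}) (A - S)"
      by auto
    have "\<forall>i\<in>I - {i0}. i0 < i" "insert i0 (I - {i0}) = I" using i0 by auto
    then show "?join x \<in> echelon_sign_matrices kk I A"
      using echelon_add_leading_row[OF D \<open>finite A\<close> _ S p] x by simp
  qed
qed

lemma card_normalized_sign_vectors:
  assumes "finite S" "a \<in> S"
  shows "card (normalized_sign_vectors a S) = 2 ^ (card S - 1)"
proof -
  let ?signs = "S - {a} \<rightarrow>\<^sub>E {-1, 1 :: int}"
  let ?extend = "\<lambda>h j. if j = a then 1 else if j \<in> S - {a} then h j else 0"
  have "bij_betw (\<lambda>p. restrict p (S - {a})) (normalized_sign_vectors a S) ?signs"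
  proof (rule bij_betw_byWitness[where f' = ?extend])
    show "\<forall>p\<in>normalized_sign_vectors a S. ?extend (restrict p (S - {a})) = p"
      unfolding normalized_sign_vectors_def by (auto intro!: ext)
    show "\<forall>h\<in>?signs. restrict (?extend h) (S - {a}) = h"
      by (auto simp: PiE_def extensional_def restrict_def intro!: ext)
    show "(\<lambda>p. restrict p (S - {a})) ` normalized_sign_vectors a S \<subseteq> ?signs"
      unfolding normalized_sign_vectors_def by force
    show "?extend ` ?signs \<subseteq> normalized_sign_vectors a S"
      unfolding normalized_sign_vectors_def using assms(2)
      by (auto simp: PiE_def Pi_def split: if_splits; force)
  qed
  then have "card (normalized_sign_vectors a S) = card ?signs" by (rule bij_betw_same_card)
  also have "\<dots> = 2 ^ (card S - 1)" using assms by (simp add: card_PiE numeral_2_eq_2)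
  finally show ?thesis .
qed

lemma finite_normalized_sign_vectors:
  assumes "finite S"
  shows "finite (normalized_sign_vectors a S)"
proof (cases "a \<in> S")
  case True
  then show ?thesis
    using card_normalized_sign_vectors[OF assms True] card_ge_0_finite by force
next
  case False
  have "a \<in> S" if "p \<in> normalized_sign_vectors a S" for p
    using that unfolding normalized_sign_vectors_def by (auto dest: spec[where x = a])
  then have "normalized_sign_vectors a S = {}" using False by blast
  then show ?thesis by simp
qed

lemma card_subsets_containing:
  assumes "finite A" "a \<in> A" "1 \<le> k"
  shows "card {S. S \<subseteq> A \<and> a \<in> S \<and> card S = k} = (card A - 1) choose (k - 1)"
proof -
  have "bij_betw (\<lambda>S. S - {a}) {S. S \<subseteq> A \<and> a \<in> S \<and> card S = k}
      {B. B \<subseteq> A - {a} \<and> card B = k - 1}"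
  proof (rule bij_betw_byWitness[where f' = "insert a"])
    show "(\<lambda>S. S - {a}) ` {S. S \<subseteq> A \<and> a \<in> S \<and> card S = k}
        \<subseteq> {B. B \<subseteq> A - {a} \<and> card B = k - 1}"
      using assms(1) by (auto dest: finite_subset)
    show "insert a ` {B. B \<subseteq> A - {a} \<and> card B = k - 1}
        \<subseteq> {S. S \<subseteq> A \<and> a \<in> S \<and> card S = k}"
    proof (rule image_subsetI)
      fix B assume B: "B \<in> {B. B \<subseteq> A - {a} \<and> card B = k - 1}"
      then have "finite B" "a \<notin> B" using assms(1) by (auto intro: finite_subset)
      then show "insert a B \<in> {S. S \<subseteq> A \<and> a \<in> S \<and> card S = k}" using B assms by auto
    qed
  qed auto
  then have "card {S. S \<subseteq> A \<and> a \<in> S \<and> card S = k} = card {B. B \<subseteq> A - {a} \<and> card B = k - 1}"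
    by (rule bij_betw_same_card)
  also have "\<dots> = (card A - 1) choose (k - 1)" using assms by (simp add: n_subsets)
  finally show ?thesis .
qed

lemma row_support_choices_remove_Min:
  assumes "finite I" "I \<noteq> {}"
  defines "i0 \<equiv> Min I"
  shows "row_support_choices kk N I =
    ((N - 1) choose (kk i0 - 1)) * row_support_choices kk (N - kk i0) (I - {i0})"
proof -
  have i0: "i0 \<in> I" "\<forall>i\<in>I. i0 \<le> i" using assms by simp_all
  have none_below: "{j\<in>I. j < i0} = {}" using i0 by auto
  have "row_support_choices kk N I = ((N - 1) choose (kk i0 - 1)) *
      (\<Prod>i\<in>I - {i0}. (N - (\<Sum>j\<in>{j\<in>I. j < i}. kk j) - 1) choose (kk i - 1))"
    unfolding row_support_choices_def prod.remove[OF assms(1) i0(1)] none_below by simp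
  also have "(\<Prod>i\<in>I - {i0}. (N - (\<Sum>j\<in>{j\<in>I. j < i}. kk j) - 1) choose (kk i - 1))
      = row_support_choices kk (N - kk i0) (I - {i0})"
    unfolding row_support_choices_def
  proof (rule prod.cong)
    fix i assume "i \<in> I - {i0}"
    then have "{j\<in>I. j < i} = insert i0 {j\<in>I - {i0}. j < i}" using i0 by force
    then have "(\<Sum>j\<in>{j\<in>I. j < i}. kk j) = kk i0 + (\<Sum>j\<in>{j\<in>I - {i0}. j < i}. kk j)"
      using assms(1) by simp
    then show "(N - (\<Sum>j\<in>{j\<in>I. j < i}. kk j) - 1) choose (kk i - 1) =
        (N - kk i0 - (\<Sum>j\<in>{j\<in>I - {i0}. j < i}. kk j) - 1) choose (kk i - 1)"
      by simp
  qed simp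
  finally show ?thesis .
qed

lemma card_echelon_sign_matrices_leading_row:
  assumes "finite I" "I \<noteq> {}" "finite A" "A \<noteq> {}" "0 < kk (Min I)"
    and rest: "\<And>S. S \<subseteq> A \<Longrightarrow> card S = kk (Min I) \<Longrightarrow>
      card (echelon_sign_matrices kk (I - {Min I}) (A - S)) = c"
  shows "card (echelon_sign_matrices kk I A) =
    ((card A - 1) choose (kk (Min I) - 1)) * 2 ^ (kk (Min I) - 1) * c"
proof -
  let ?subsets = "{S. S \<subseteq> A \<and> Min A \<in> S \<and> card S = kk (Min I)}"
  let ?part = "\<lambda>S. normalized_sign_vectors (Min A) S \<times> echelon_sign_matrices kk (I - {Min I}) (A - S)"
  have part: "finite (?part S)" "card (?part S) = 2 ^ (kk (Min I) - 1) * c" if "S \<in> ?subsets" for S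
  proof -
    have "finite S" using that \<open>finite A\<close> by (auto intro: finite_subset)
    then show "finite (?part S)"
      using assms(1,3) by (intro finite_cartesian_product finite_normalized_sign_vectors
          finite_echelon_sign_matrices) simp_all
    show "card (?part S) = 2 ^ (kk (Min I) - 1) * c"
      using that \<open>finite S\<close> rest card_normalized_sign_vectors by (simp add: card_cartesian_product)
  qed
  have "card (echelon_sign_matrices kk I A) = card (SIGMA S:?subsets. ?part S)"
    using echelon_leading_row_bij[OF assms(1-4)] by (rule bij_betw_same_card)
  also have "\<dots> = card ?subsets * (2 ^ (kk (Min I) - 1) * c)"
    using part \<open>finite A\<close> by (simp add: card_SigmaI)
  also have "card ?subsets = (card A - 1) choose (kk (Min I) - 1)"
    using card_subsets_containing[OF \<open>finite A\<close> Min_in[OF assms(3,4)]] assms(5) by simp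
  finally show ?thesis by simp
qed

lemma card_echelon_sign_matrices:
  assumes "finite I" "finite A" "\<forall>i\<in>I. 0 < kk i" "(\<Sum>i\<in>I. kk i) = card A"
  shows "card (echelon_sign_matrices kk I A) =
    2 ^ (card A - card I) * row_support_choices kk (card A) I"
  using assms
proof (induction "card I" arbitrary: I A)
  case 0
  then have "I = {}" "A = {}" by auto
  then show ?case by (simp add: echelon_sign_matrices_empty row_support_choices_def)
next
  case (Suc n)
  define i0 where "i0 = Min I"
  have "I \<noteq> {}" using Suc.hyps(2) by auto
  then have "i0 \<in> I" using Suc.prems(1) i0_def by simp
  then have card_rest: "card (I - {i0}) = n" and kk_i0: "0 < kk i0"
    and sum_rest: "card A = kk i0 + (\<Sum>i\<in>I - {i0}. kk i)"
    using Suc.hyps(2) Suc.prems sum.remove[OF Suc.prems(1) \<open>i0 \<in> I\<close>, of kk] by auto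
  have "n \<le> (\<Sum>i\<in>I - {i0}. kk i)"
    using sum_mono[of "I - {i0}" "\<lambda>_. 1" kk] Suc.prems(3) card_rest by fastforce
  then have exponent: "(kk i0 - 1) + (card A - kk i0 - n) = card A - card I"
    using sum_rest kk_i0 Suc.hyps(2) by linarith
  have "A \<noteq> {}" using sum_rest kk_i0 by auto
  have "card (echelon_sign_matrices kk (I - {i0}) (A - S)) =
      2 ^ (card A - kk i0 - n) * row_support_choices kk (card A - kk i0) (I - {i0})"
    if "S \<subseteq> A" "card S = kk i0" for S
  proof -
    have "card (A - S) = card A - kk i0"
      using that Suc.prems(2) by (simp add: card_Diff_subset finite_subset)
    then show ?thesis using Suc.hyps(1)[of "I - {i0}" "A - S"] Suc.prems card_rest sum_rest by simp
  qed
  then have "card (echelon_sign_matrices kk I A) = ((card A - 1) choose (kk i0 - 1)) * 2 ^ (kk i0 - 1) *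
      (2 ^ (card A - kk i0 - n) * row_support_choices kk (card A - kk i0) (I - {i0}))"
    using card_echelon_sign_matrices_leading_row[OF Suc.prems(1) \<open>I \<noteq> {}\<close> Suc.prems(2) \<open>A \<noteq> {}\<close>]
      kk_i0 unfolding i0_def by blast
  also have "\<dots> = 2 ^ (card A - card I) * row_support_choices kk (card A) I"
    using exponent row_support_choices_remove_Min[OF Suc.prems(1) \<open>I \<noteq> {}\<close>, of kk "card A", folded i0_def]
    by (simp add: power_add[symmetric] algebra_simps)
  finally show ?case .
qed

lemma division_image_Un:
  assumes "is_division k m \<nu> \<mu>"
  shows "\<nu> ` {1..m} \<union> \<mu> ` {1..k-m} = {1..k}"
proof -
  have "strict_mono_on {1..m} \<nu>" "strict_mono_on {1..k-m} \<mu>"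
    and sub: "\<nu> ` {1..m} \<subseteq> {1..k}" "\<mu> ` {1..k-m} \<subseteq> {1..k}"
    and disjoint: "\<nu> ` {1..m} \<inter> \<mu> ` {1..k-m} = {}" and "m \<le> k - 1"
    using assms unfolding is_division_def by auto
  then have "card (\<nu> ` {1..m}) = m" "card (\<mu> ` {1..k-m}) = k - m"
    by (simp_all add: card_image strict_mono_on_imp_inj_on)
  then have "card (\<nu> ` {1..m} \<union> \<mu> ` {1..k-m}) = card {1..k}"
    using card_Un_disjoint[OF _ _ disjoint] \<open>m \<le> k - 1\<close> by simp
  then show ?thesis using sub by (intro card_subset_eq) auto
qed

lemma k_admissible_sign_matrix_pivots:
  assumes "k_admissible k m D" and entries: "\<forall>i j. D i j \<in> {-1, 0, 1}"
  shows "\<exists>\<nu>. strict_mono_on {1..m} \<nu> \<and>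
    (\<forall>i\<in>{1..m}. D i (\<nu> i) = 1 \<and> (\<forall>j\<in>{1..k}. D i j \<noteq> 0 \<longrightarrow> \<nu> i \<le> j))"
proof -
  obtain \<nu> \<mu> q where "q > 0" and div: "is_division k m \<nu> \<mu>"
    and at_pivots: "\<And>i j. i \<in> {1..m} \<Longrightarrow> j \<in> {1..m} \<Longrightarrow> D i (\<nu> j) = (if i = j then q else 0)"
    and before_pivot: "\<And>i l. i \<in> {1..m} \<Longrightarrow> l \<in> {1..k-m} \<Longrightarrow> \<mu> l < \<nu> i \<Longrightarrow> D i (\<mu> l) = 0"
    using assms(1) unfolding k_admissible_def admissible_wrt_def by blast
  have "1 \<in> {1..m}" using div unfolding is_division_def by simp
  then have "q \<in> {-1, 0, 1}" using at_pivots[of 1 1] entries by metis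
  then have "q = 1" using \<open>q > 0\<close> by auto
  have "\<nu> i \<le> j" if i: "i \<in> {1..m}" and j: "j \<in> {1..k}" and "D i j \<noteq> 0" for i j
  proof -
    have "j \<in> \<nu> ` {1..m} \<union> \<mu> ` {1..k-m}" using division_image_Un[OF div] j by simp
    then show ?thesis
    proof
      assume "j \<in> \<nu> ` {1..m}"
      then obtain i' where "i' \<in> {1..m}" "j = \<nu> i'" by auto
      then show ?thesis using at_pivots[OF i] \<open>D i j \<noteq> 0\<close> by (cases "i = i'") auto
    next
      assume "j \<in> \<mu> ` {1..k-m}"
      then show ?thesis using before_pivot[OF i] \<open>D i j \<noteq> 0\<close> by force
    qed
  qed
  moreover have "strict_mono_on {1..m} \<nu>" using div unfolding is_division_def by blast
  ultimately show ?thesis using at_pivots \<open>q = 1\<close> by auto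
qed

lemma strict_mono_enumeration_from_1:
  fixes C :: "nat set"
  assumes "finite C"
  obtains \<mu> where "strict_mono_on {1..card C} \<mu>" "\<mu> ` {1..card C} = C"
proof -
  obtain h where h: "bij_betw h {..<card C} C" "strict_mono_on {..<card C} h"
    using ex_bij_betw_strict_mono_card[OF assms] .
  have shift: "{..<card C} = (\<lambda>l. l - 1) ` {1..card C}"
    by (auto simp: image_iff intro!: bexI[where x = "Suc _"])
  show thesis
  proof
    show "strict_mono_on {1..card C} (\<lambda>l. h (l - 1))"
      by (intro strict_mono_onI, rule strict_mono_onD[OF h(2)]) auto
    show "(\<lambda>l. h (l - 1)) ` {1..card C} = C"
      using bij_betw_imp_surj_on[OF h(1)] by (simp add: shift image_image)
  qed
qed

lemma division_with_complement:
  assumes "strict_mono_on {1..m} \<nu>" "\<nu> ` {1..m} \<subseteq> {1..k}" "1 \<le> m" "m \<le> k - 1"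
  obtains \<mu> where "is_division k m \<nu> \<mu>" "\<mu> ` {1..k-m} = {1..k} - \<nu> ` {1..m}"
proof -
  have "card (\<nu> ` {1..m}) = m" using assms(1) by (simp add: card_image strict_mono_on_imp_inj_on)
  then have "card ({1..k} - \<nu> ` {1..m}) = k - m" using assms(2) by (simp add: card_Diff_subset)
  then obtain \<mu> where "strict_mono_on {1..k-m} \<mu>" "\<mu> ` {1..k-m} = {1..k} - \<nu> ` {1..m}"
    using strict_mono_enumeration_from_1[of "{1..k} - \<nu> ` {1..m}"] by auto
  moreover from this have "is_division k m \<nu> \<mu>"
    using assms unfolding is_division_def by auto
  ultimately show thesis using that by blast
qed

lemma echelon_sign_matrix_k_admissible:
  assumes D: "D \<in> echelon_sign_matrices kk {1..m} {1..k}" and "2 \<le> k" "1 \<le> m" "m \<le> k - 1"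
  shows "k_admissible k m D"
proof -
  obtain \<nu> where support: "\<And>i j. i \<notin> {1..m} \<or> j \<notin> {1..k} \<Longrightarrow> D i j = 0"
    and column: "\<And>j. j \<in> {1..k} \<Longrightarrow> card {i\<in>{1..m}. D i j \<noteq> 0} = 1"
    and mono: "strict_mono_on {1..m} \<nu>" and pivot: "\<And>i. i \<in> {1..m} \<Longrightarrow> D i (\<nu> i) = 1"
    and leading: "\<And>i j. i \<in> {1..m} \<Longrightarrow> j \<in> {1..k} \<Longrightarrow> D i j \<noteq> 0 \<Longrightarrow> \<nu> i \<le> j"
    by (rule echelon_sign_matricesE[OF D]) blast
  have pivots_in: "\<nu> ` {1..m} \<subseteq> {1..k}" using pivot support by (metis image_subsetI zero_neq_one)
  obtain \<mu> where div: "is_division k m \<nu> \<mu>" and \<mu>: "\<mu> ` {1..k-m} = {1..k} - \<nu> ` {1..m}"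
    using division_with_complement[OF mono pivots_in assms(3,4)] .
  have "admissible_wrt k m \<nu> \<mu> 1 D"
    unfolding admissible_wrt_def
  proof (intro conjI ballI impI)
    fix j assume "j \<in> {1..k}"
    then have "{i\<in>{1..m}. D i j \<noteq> 0} \<noteq> {}" using column by (metis card.empty zero_neq_one)
    then show "\<exists>i\<in>{1..m}. D i j \<noteq> 0" by blast
  next
    have "1 \<in> {1..m}" using assms(3) by simp
    moreover from this have "\<nu> 1 \<in> {1..k}" using pivots_in by blast
    ultimately have "D 1 (\<nu> 1) \<in> {D i j | i j. i \<in> {1..m} \<and> j \<in> {1..k}}" by fast
    then show "Gcd {D i j | i j. i \<in> {1..m} \<and> j \<in> {1..k}} = 1"
      using pivot[OF \<open>1 \<in> {1..m}\<close>] by (intro Gcd_eq_1_I[of 1]) simp_all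
  next
    fix i j assume "i \<in> {1..m}" "j \<in> {1..m}"
    then show "D i (\<nu> j) = (if i = j then 1 else 0)"
      using pivot echelon_sign_matrices_column_unique[OF D, of i "\<nu> j" j] by auto
  next
    fix i l assume "i \<in> {1..m}" "l \<in> {1..k-m}" "\<mu> l < \<nu> i"
    moreover have "\<mu> l \<in> {1..k}" using \<mu> \<open>l \<in> {1..k-m}\<close> by blast
    ultimately show "D i (\<mu> l) = 0" using leading by fastforce
  qed
  then show ?thesis using div \<open>2 \<le> k\<close> zero_less_one unfolding k_admissible_def by blast
qed

lemma X_set_eq_echelon_sign_matrices:
  assumes "2 \<le> k" "1 \<le> m" "m \<le> k - 1"
  shows "X_set k m kk = echelon_sign_matrices kk {1..m} {1..k}"
proof (intro equalityI subsetI)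
  fix D assume "D \<in> X_set k m kk"
  then show "D \<in> echelon_sign_matrices kk {1..m} {1..k}"
    using k_admissible_sign_matrix_pivots[of k m D]
    unfolding X_set_def echelon_sign_matrices_def by blast
next
  fix D assume "D \<in> echelon_sign_matrices kk {1..m} {1..k}"
  then show "D \<in> X_set k m kk"
    using echelon_sign_matrix_k_admissible[OF _ assms]
    unfolding X_set_def echelon_sign_matrices_def by blast
qed

lemma row_support_choices_interval:
  assumes "1 \<le> m" "(\<Sum>i=1..m. kk i) = k"
  shows "row_support_choices kk k {1..m} =
    (\<Prod>i=1..m-1. (k - (\<Sum>j=1..i-1. kk j) - 1) choose (kk i - 1))"
proof -
  have m: "{1..m} = insert m {1..m-1}" "m \<notin> {1..m-1}" using assms(1) by auto
  have last: "k - (\<Sum>j=1..m-1. kk j) = kk m"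
    using assms(2) m by (metis add_diff_cancel_right' finite_atLeastAtMost sum.insert)
  have "row_support_choices kk k {1..m} =
      (\<Prod>i\<in>{1..m}. (k - (\<Sum>j=1..i-1. kk j) - 1) choose (kk i - 1))"
    unfolding row_support_choices_def
  proof (rule prod.cong)
    fix i assume "i \<in> {1..m}"
    then have "{j\<in>{1..m}. j < i} = {1..i-1}" by auto
    then show "(k - (\<Sum>j\<in>{j\<in>{1..m}. j < i}. kk j) - 1) choose (kk i - 1) =
        (k - (\<Sum>j=1..i-1. kk j) - 1) choose (kk i - 1)" by simp
  qed simp
  also have "\<dots> = (\<Prod>i=1..m-1. (k - (\<Sum>j=1..i-1. kk j) - 1) choose (kk i - 1))"
    unfolding m(1) using m(2) last[THEN arg_cong[where f = "\<lambda>n. n - 1"]] by simp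
  finally show ?thesis .
qed

theorem proposition3p4:
  fixes k m :: nat and kk :: "nat \<Rightarrow> nat"
  assumes "2 \<le> k" and "1 \<le> m" and "m \<le> k - 1"
    and "\<forall>i\<in>{1..m}. kk i > 0" and "(\<Sum>i=1..m. kk i) = k"
  shows "card (X_set k m kk) =
    2 ^ (k - m) * (\<Prod>i=1..m-1. (k - (\<Sum>j=1..i-1. kk j) - 1) choose (kk i - 1))"
proof -
  have "card (X_set k m kk) = card (echelon_sign_matrices kk {1..m} {1..k})"
    using X_set_eq_echelon_sign_matrices[OF assms(1-3)] by simp
  also have "\<dots> = 2 ^ (k - m) * row_support_choices kk k {1..m}"
    using card_echelon_sign_matrices[of "{1..m}" "{1..k}" kk] assms(4,5) by simp
  finally show ?thesis using row_support_choices_interval[OF assms(2,5)] by simp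
qed

end
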